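(* Let $d\ge2$ and let $q^{\mathrm{pu}}$ be the $\varepsilon$-LDP $\texttt{PrivUnit}_2$ mechanism on $\mathbb{S}^{d-1}$ with parameters $p_0$ and $\gamma$ and estimator $\hat{\mathbf{x}}^{\mathrm{pu}}=\mathbf{z}/m_{\mathrm{pu}}$. Let $q^{\mathrm{mmrc}}$ denote the MMRC mechanism simulating $\texttt{PrivUnit}_2$ with $N$ candidates and estimator $\hat{\mathbf{x}}^{\mathrm{mmrc}}=\mathbf{z}_K/m_{\mathrm{mmrc}}$. Let $\lambda>0$. If \[ N\ge\frac{e^{2\varepsilon}}{2}\Big(\frac{2(1+\lambda)}{\lambda(p_0-1/2)}\Big)^2\ln\Big(\frac{4(1+\lambda)}{\lambda(p_0-1/2)}\Big), \] then for every $\mathbf{x}\in\mathbb{S}^{d-1}$, \[ \mathbb{E}_{q^{\mathrm{mmrc}}}\big[\|\hat{\mathbf{x}}^{\mathrm{mmrc}}-\mathbf{x}\|_2^2\big]\le(1+\lambda)^2E+2(1+\lambda)(2+\lambda)\sqrt{E}+(2+\lambda)^2,\qquad E=\mathbb{E}_{q^{\mathrm{pu}}}\big[\|\hat{\mathbf{x}}^{\mathrm{pu}}-\mathbf{x}\|_2^2\big]. \]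
   Context: $\texttt{PrivUnit}_2$ with parameters $\gamma\in[0,1]$, $p_0\ge1/2$ (chosen so the mechanism is $\varepsilon$-LDP, i.e. its output density ratio between any two inputs is at most $e^\varepsilon$): on input $\mathbf{x}\in\mathbb{S}^{d-1}$, output $\mathbf{z}$ uniform on $\mathsf{Cap}_{\mathbf{x}}=\{\mathbf{z}\in\mathbb{S}^{d-1}:\langle\mathbf{z},\mathbf{x}\rangle\ge\gamma\}$ with probability $p_0$ and uniform on its complement otherwise. Its density w.r.t. the uniform probability on the sphere is $c_1=p_0/\bar\theta$ on the cap and $c_2=(1-p_0)/(1-\bar\theta)$ off it, where $\bar\theta=\mathbb{P}_{\mathbf{z}\sim\mathrm{Unif}(\mathbb{S}^{d-1})}(\mathbf{z}\in\mathsf{Cap}_{\mathbf{x}})$. For $p\in[0,1]$ let $m(p)=\frac{(1-\gamma^2)^{\alpha}}{2^{d-2}(d-1)}\big[\frac{p}{B(\alpha,\alpha)-B(\tau;\alpha,\alpha)}-\frac{1-p}{B(\tau;\alpha,\alpha)}\big]$, $\alpha=\frac{d-1}2$, $\tau=\frac{1+\gamma}2$, $B(x;a,b)=\int_0^xt^{a-1}(1-t)^{b-1}dt$, $B(a,b)=B(1;a,b)$; $m_{\mathrm{pu}}=m(p_0)$. MMRC simulating $\texttt{PrivUnit}_2$: draw $\mathbf{z}_1,\dots,\mathbf{z}_N$ i.i.d. uniform on $\mathbb{S}^{d-1}$; $\theta=\frac1N\#\{k:\mathbf{z}_k\in\mathsf{Cap}_{\mathbf{x}}\}$; $\pi^{\mathrm{mrc}}(k)=\frac1N\frac{c_i}{\theta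 c_1+(1-\theta)c_2}$ ($i=1$ for cap candidates, $i=2$ otherwise); $t_u=\frac1N\frac{c_1}{\bar\theta c_1+(1-\bar\theta)c_2}$, $t_l=\frac1N\frac{c_2}{\bar\theta c_1+(1-\bar\theta)c_2}$; $\pi^{\mathrm{mmrc}}=\pi^{\mathrm{mrc}}$ if $\theta=\bar\theta$; if $\theta<\bar\theta$, $\pi^{\mathrm{mmrc}}(k)=t_u$ on cap candidates and $\frac{1-N\theta t_u}{N(1-\theta)}$ otherwise; if $\theta>\bar\theta$, $\pi^{\mathrm{mmrc}}(k)=t_l$ on non-cap candidates and $\frac{1-N(1-\theta)t_l}{N\theta}$ otherwise. $K\sim\pi^{\mathrm{mmrc}}$, $p_{\mathrm{mmrc}}=\mathbb{P}(\mathbf{z}_K\in\mathsf{Cap}_{\mathbf{x}})$ and $m_{\mathrm{mmrc}}=m(p_{\mathrm{mmrc}})$. $\mathbb{E}_{q^{\mathrm{mmrc}}}$ is over the candidates and $K$. *)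

theory Defs
  imports "HOL-Probability.Probability"
begin

text \<open>Uniform probability measure on the unit sphere S^{d-1} of a Euclidean space:
  the push-forward of the uniform distribution on the unit ball under radial
  normalisation x \<mapsto> x / |x| (this is the normalised surface measure).\<close>
definition sphere_unif :: "('a::euclidean_space) measure" where
  "sphere_unif = distr (uniform_measure lborel (ball 0 1)) borel (\<lambda>v. (1 / norm v) *\<^sub>R v)"

definition cap :: "'a::euclidean_space \<Rightarrow> real \<Rightarrow> 'a set" where
  "cap x \<gamma> = {z \<in> sphere 0 1. z \<bullet> x \<ge> \<gamma>}"

definition theta_bar :: "'a::euclidean_space \<Rightarrow> real \<Rightarrow> real" where
  "theta_bar x \<gamma> = measure (sphere_unif :: 'a measure) (cap x \<gamma>)"

definition pu_c1 :: "'a::euclidean_space \<Rightarrow> real \<Rightarrow> real \<Rightarrow> real" where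
  "pu_c1 x \<gamma> p0 = p0 / theta_bar x \<gamma>"

definition pu_c2 :: "'a::euclidean_space \<Rightarrow> real \<Rightarrow> real \<Rightarrow> real" where
  "pu_c2 x \<gamma> p0 = (1 - p0) / (1 - theta_bar x \<gamma>)"

definition pu_density :: "'a::euclidean_space \<Rightarrow> real \<Rightarrow> real \<Rightarrow> 'a \<Rightarrow> real" where
  "pu_density x \<gamma> p0 z = (if z \<in> cap x \<gamma> then pu_c1 x \<gamma> p0 else pu_c2 x \<gamma> p0)"

definition inc_beta :: "real \<Rightarrow> real \<Rightarrow> real \<Rightarrow> real" where
  "inc_beta x a b = integral {0..x} (\<lambda>t. t powr (a - 1) * (1 - t) powr (b - 1))"

definition beta_fn :: "real \<Rightarrow> real \<Rightarrow> real" where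
  "beta_fn a b = inc_beta 1 a b"

definition m_fun :: "nat \<Rightarrow> real \<Rightarrow> real \<Rightarrow> real" where
  "m_fun d \<gamma> p =
     (let \<alpha> = (real d - 1) / 2; \<tau> = (1 + \<gamma>) / 2 in
      (1 - \<gamma>\<^sup>2) powr \<alpha> / (2 ^ (d - 2) * (real d - 1)) *
      (p / (beta_fn \<alpha> \<alpha> - inc_beta \<tau> \<alpha> \<alpha>) - (1 - p) / inc_beta \<tau> \<alpha> \<alpha>))"

definition E_pu :: "'a::euclidean_space \<Rightarrow> real \<Rightarrow> real \<Rightarrow> real" where
  "E_pu x \<gamma> p0 =
     (\<integral>z. pu_density x \<gamma> p0 z *
          (norm ((1 / m_fun DIM('a) \<gamma> p0) *\<^sub>R z - x))\<^sup>2 \<partial>(sphere_unif :: 'a measure))"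

definition mmrc_theta :: "nat \<Rightarrow> 'a::euclidean_space \<Rightarrow> real \<Rightarrow> (nat \<Rightarrow> 'a) \<Rightarrow> real" where
  "mmrc_theta N x \<gamma> zs = real (card {k. k < N \<and> zs k \<in> cap x \<gamma>}) / real N"

definition mmrc_pi :: "nat \<Rightarrow> 'a::euclidean_space \<Rightarrow> real \<Rightarrow> real \<Rightarrow> (nat \<Rightarrow> 'a) \<Rightarrow> nat \<Rightarrow> real" where
  "mmrc_pi N x \<gamma> p0 zs k =
     (let \<theta> = mmrc_theta N x \<gamma> zs; tb = theta_bar x \<gamma>;
          c1 = pu_c1 x \<gamma> p0; c2 = pu_c2 x \<gamma> p0;
          tu = (1 / real N) * (c1 / (tb * c1 + (1 - tb) * c2));
          tl = (1 / real N) * (c2 / (tb * c1 + (1 - tb) * c2));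
          incap = (zs k \<in> cap x \<gamma>) in
      if \<theta> = tb then
        (1 / real N) * ((if incap then c1 else c2) / (\<theta> * c1 + (1 - \<theta>) * c2))
      else if \<theta> < tb then
        (if incap then tu else (1 - real N * \<theta> * tu) / (real N * (1 - \<theta>)))
      else
        (if incap then (1 - real N * (1 - \<theta>) * tl) / (real N * \<theta>) else tl))"

definition candidates :: "nat \<Rightarrow> (nat \<Rightarrow> 'a::euclidean_space) measure" where
  "candidates N = PiM {..<N} (\<lambda>_. sphere_unif)"

definition p_mmrc :: "nat \<Rightarrow> 'a::euclidean_space \<Rightarrow> real \<Rightarrow> real \<Rightarrow> real" where
  "p_mmrc N x \<gamma> p0 =
     (\<integral>zs. (\<Sum>k<N. mmrc_pi N x \<gamma> p0 zs k * indicator (cap x \<gamma>) (zs k)) \<partial>candidates N)"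

definition E_mmrc :: "nat \<Rightarrow> 'a::euclidean_space \<Rightarrow> real \<Rightarrow> real \<Rightarrow> real" where
  "E_mmrc N x \<gamma> p0 =
     (\<integral>zs. (\<Sum>k<N. mmrc_pi N x \<gamma> p0 zs k *
          (norm ((1 / m_fun DIM('a) \<gamma> (p_mmrc N x \<gamma> p0)) *\<^sub>R zs k - x))\<^sup>2) \<partial>candidates N)"

end

theory Submission
  imports Defs
begin

text \<open>The normalising constant \<open>m\<close> is an increasing affine function of the cap probability
  whose root lies at or below \<open>1/2\<close>. MMRC selects a cap candidate with a probability that falls
  short of \<open>p0\<close> by at most \<open>c1 |\<theta> - theta_bar|\<close>, where \<open>\<theta>\<close> is the empirical cap fraction of the
  \<open>N\<close> candidates; \<open>\<epsilon>\<close>-LDP gives \<open>c1 \<le> e\<^sup>\<epsilon>\<close> and \<open>\<theta>\<close> has variance at most \<open>1/(4N)\<close>, so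
  \<open>p_mmrc \<ge> p0 - e\<^sup>\<epsilon>/(2\<surd>N) \<ge> p0 - lam (p0 - 1/2)/(1 + lam)\<close> and therefore
  \<open>m_mmrc \<ge> m_pu/(1 + lam)\<close>. Both estimators are unit vectors scaled by \<open>1/m\<close>, so the triangle
  inequality gives \<open>E_mmrc \<le> (1/m_mmrc + 1)\<^sup>2\<close> and the reverse triangle inequality gives
  \<open>\<surd>E_pu \<ge> 1/m_pu - 1\<close>; together \<open>E_mmrc \<le> ((1 + lam) \<surd>E_pu + 2 + lam)\<^sup>2\<close>.\<close>

section \<open>Uniform measure on the sphere\<close>

lemma prob_space_uniform_unit_ball: "prob_space (uniform_measure lborel (ball (0::'a::euclidean_space) 1))"
  using emeasure_lborel_ball_finite[of "0::'a" 1] content_ball_pos[of 1 "0::'a"]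
  by (intro prob_space_uniform_measure) (auto simp: emeasure_eq_ennreal_measure)

lemma sphere_unif_eq_distr_sgn:
  "sphere_unif = distr (uniform_measure lborel (ball 0 1)) borel (sgn :: 'a::euclidean_space \<Rightarrow> 'a)"
proof -
  have "(\<lambda>v::'a. (1 / norm v) *\<^sub>R v) = sgn"
    by (auto simp: fun_eq_iff sgn_div_norm divide_inverse_commute)
  then show ?thesis unfolding sphere_unif_def by simp
qed

lemma sets_sphere_unif [simp]: "sets (sphere_unif :: 'a::euclidean_space measure) = sets borel"
  unfolding sphere_unif_eq_distr_sgn by simp

lemma space_sphere_unif [simp]: "space (sphere_unif :: 'a::euclidean_space measure) = UNIV"
  unfolding sphere_unif_eq_distr_sgn by simp

lemma prob_space_sphere_unif: "prob_space (sphere_unif :: 'a::euclidean_space measure)"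
  unfolding sphere_unif_eq_distr_sgn
  by (intro prob_space.prob_space_distr prob_space_uniform_unit_ball) simp

lemma AE_sphere_unif_norm: "AE z in (sphere_unif :: 'a::euclidean_space measure). norm z = 1"
proof -
  have "AE v in (lborel::'a measure). v \<noteq> 0"
    by (rule AE_I'[where N="{0}"]) auto
  then have "AE v in uniform_measure lborel (ball (0::'a) 1). norm (sgn v) = 1"
    by (intro AE_uniform_measureI) (auto elim!: eventually_mono simp: norm_sgn)
  then show ?thesis
    unfolding sphere_unif_eq_distr_sgn by (subst AE_distr_iff) auto
qed

lemma measure_sphere_unif_pos:
  fixes S :: "'a::euclidean_space set"
  assumes S: "S \<in> sets borel" and r: "r > 0" and "ball c r \<subseteq> ball 0 1"
    and sgn_in: "\<And>v. v \<in> ball c r \<Longrightarrow> sgn v \<in> S"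
  shows "measure sphere_unif S > 0"
proof -
  have fin: "emeasure lborel (ball (0::'a) 1) < \<infinity>"
    using emeasure_lborel_ball_finite by (simp add: top.not_eq_extremum)
  have "0 < emeasure lborel (ball c r)"
    using content_ball_pos[OF r] emeasure_lborel_ball_finite[of c r]
    by (simp add: emeasure_eq_ennreal_measure)
  also have "\<dots> \<le> emeasure lborel (sgn -` S \<inter> ball 0 1)"
    using assms by (intro emeasure_mono) (auto intro: measurable_sets_borel[OF borel_measurable_sgn])
  finally have "0 < emeasure lborel (sgn -` S \<inter> ball 0 1) / emeasure lborel (ball (0::'a) 1)"
    using fin by (simp add: ennreal_zero_less_divide)
  also have "\<dots> = emeasure sphere_unif S"
    unfolding sphere_unif_eq_distr_sgn using S
    by (simp add: emeasure_distr emeasure_uniform_measure measurable_sets_borel[OF borel_measurable_sgn] Int_commute)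
  finally show ?thesis
    using finite_measure.emeasure_eq_measure[OF prob_space.finite_measure[OF prob_space_sphere_unif]]
    by (metis ennreal_less_zero_iff)
qed

lemma cap_borel [measurable]: "cap x \<gamma> \<in> sets borel"
proof -
  have "cap x \<gamma> = sphere 0 1 \<inter> {z. \<gamma> \<le> x \<bullet> z}"
    unfolding cap_def by (auto simp: inner_commute)
  then show ?thesis by (simp add: closed_halfspace_ge)
qed

lemma theta_bar_pos:
  fixes x :: "'a::euclidean_space"
  assumes x: "norm x = 1" and "0 \<le> \<gamma>" "\<gamma> < 1"
  shows "0 < theta_bar x \<gamma>"
  unfolding theta_bar_def
proof (rule measure_sphere_unif_pos)
  define r where "r = (1 - \<gamma>) / 4"
  show r: "r > 0" using assms by (simp add: r_def)
  have "norm v < 1/2 + r \<and> 1/2 - r < v \<bullet> x" if "v \<in> ball (x /\<^sub>R 2) r" for v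
  proof -
    have d: "norm (v - x /\<^sub>R 2) < r" using that by (simp add: dist_norm norm_minus_commute)
    have "\<bar>(v - x /\<^sub>R 2) \<bullet> x\<bar> \<le> norm (v - x /\<^sub>R 2)"
      using Cauchy_Schwarz_ineq2[of "v - x /\<^sub>R 2" x] x by simp
    then show ?thesis
      using d norm_triangle_ineq[of "v - x /\<^sub>R 2" "x /\<^sub>R 2"] x
      by (simp add: inner_diff_left dot_square_norm)
  qed
  note near = this
  show "ball (x /\<^sub>R 2) r \<subseteq> ball 0 1"
  proof
    fix v assume "v \<in> ball (x /\<^sub>R 2) r"
    then have "norm v < 1/2 + r" using near by blast
    moreover have "r \<le> 1/4" using assms by (simp add: r_def)
    ultimately show "v \<in> ball 0 1" by simp
  qed
  fix v assume "v \<in> ball (x /\<^sub>R 2) r"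
  then have "norm v < 1/2 + r" "1/2 - r < v \<bullet> x" using near by auto
  moreover have "\<gamma> * (1/2 + r) \<le> 1/2 - r"
  proof -
    have "1/2 - r - \<gamma> * (1/2 + r) = (1 - \<gamma>)\<^sup>2 / 4"
      by (simp add: r_def power2_eq_square field_simps)
    then show ?thesis by (smt (verit) zero_le_power2 divide_nonneg_pos)
  qed
  ultimately have "\<gamma> * norm v \<le> v \<bullet> x"
    using assms by (smt (verit) mult_left_mono)
  moreover have "v \<noteq> 0" using \<open>1/2 - r < v \<bullet> x\<close> assms by (auto simp: r_def)
  ultimately show "sgn v \<in> cap x \<gamma>"
    by (simp add: cap_def norm_sgn sgn_div_norm field_simps)
qed simp

lemma theta_bar_less_1:
  fixes x :: "'a::euclidean_space"
  assumes x: "norm x = 1" and "0 \<le> \<gamma>"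
  shows "theta_bar x \<gamma> < 1"
proof -
  have "0 < measure sphere_unif (- cap x \<gamma>)"
  proof (rule measure_sphere_unif_pos)
    have d: "norm (v + x /\<^sub>R 2) < 1/4" if "v \<in> ball (- x /\<^sub>R 2) (1/4)" for v
      using that by (simp add: dist_norm norm_minus_commute)
    show "ball (- x /\<^sub>R 2) (1/4) \<subseteq> ball 0 1"
    proof
      fix v assume "v \<in> ball (- x /\<^sub>R 2) (1/4)"
      then have "norm (v + x /\<^sub>R 2) < 1/4" by (rule d)
      moreover have "norm v \<le> norm (v + x /\<^sub>R 2) + 1/2"
        using norm_triangle_ineq4[of "v + x /\<^sub>R 2" "x /\<^sub>R 2"] x by simp
      ultimately show "v \<in> ball 0 1" by simp
    qed
    fix v assume "v \<in> ball (- x /\<^sub>R 2) (1/4)"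
    note d = d[OF this]
    have "\<bar>(v + x /\<^sub>R 2) \<bullet> x\<bar> \<le> norm (v + x /\<^sub>R 2)"
      using Cauchy_Schwarz_ineq2[of "v + x /\<^sub>R 2" x] x by simp
    then have "v \<bullet> x < 0"
      using d x by (simp add: inner_add_left dot_square_norm)
    moreover have "v \<noteq> 0" using \<open>v \<bullet> x < 0\<close> by auto
    ultimately have "sgn v \<bullet> x < 0"
      by (simp add: sgn_div_norm mult_pos_neg)
    then show "sgn v \<in> - cap x \<gamma>"
      using assms by (auto simp: cap_def)
  qed auto
  then show ?thesis
    using prob_space.prob_compl[OF prob_space_sphere_unif, of "cap x \<gamma>"]
    by (simp add: theta_bar_def Compl_eq_Diff_UNIV)
qed

section \<open>Beta integrals and the normalising constant\<close>

lemma integral_beta_integrand_pos: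
  fixes a b u v :: real
  assumes a: "a > 0" and b: "b > 0" and uv: "0 \<le> u" "u < v" "v \<le> 1"
  shows "0 < integral {u..v} (\<lambda>t. t powr (a - 1) * (1 - t) powr (b - 1))"
proof -
  let ?f = "\<lambda>t::real. t powr (a - 1) * (1 - t) powr (b - 1)"
  define u' v' where "u' = (2 * u + v) / 3" and "v' = (u + 2 * v) / 3"
  have uv': "0 < u'" "u' < v'" "v' < 1" "u \<le> u'" "v' \<le> v"
    using uv by (auto simp: u'_def v'_def)
  have cont: "continuous_on {u'..v'} ?f"
    using uv' by (intro continuous_intros) auto
  have "integral {u'..v'} (\<lambda>_. 0) < integral {u'..v'} ?f"
    using integral_less[of u' v' "\<lambda>_. 0" ?f] cont uv' by simp
  also have "\<dots> \<le> integral {u..v} ?f"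
  proof (rule integral_subset_le)
    show "?f integrable_on {u..v}"
      by (rule integrable_subinterval_real[OF integrable_Beta'[OF a b]]) (use uv in auto)
  qed (use cont uv' in \<open>auto intro: integrable_continuous_interval\<close>)
  finally show ?thesis by simp
qed

lemma inc_beta_pos:
  assumes "a > 0" "b > 0" "0 < \<tau>" "\<tau> \<le> 1"
  shows "0 < inc_beta \<tau> a b"
  unfolding inc_beta_def using assms by (intro integral_beta_integrand_pos) auto

lemma inc_beta_mono:
  assumes a: "a > 0" and b: "b > 0" and "0 \<le> s" "s \<le> t" "t \<le> 1"
  shows "inc_beta s a b \<le> inc_beta t a b"
  unfolding inc_beta_def
proof (rule integral_subset_le)
  show "(\<lambda>t. t powr (a - 1) * (1 - t) powr (b - 1)) integrable_on {0..t}"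
    by (rule integrable_subinterval_real[OF integrable_Beta'[OF a b]]) (use assms in auto)
  then show "(\<lambda>t. t powr (a - 1) * (1 - t) powr (b - 1)) integrable_on {0..s}"
    by (rule integrable_subinterval_real) (use assms in auto)
qed (use assms in auto)

lemma beta_fn_minus_inc_beta:
  assumes a: "a > 0" and b: "b > 0" and "0 \<le> \<tau>" "\<tau> \<le> 1"
  shows "beta_fn a b - inc_beta \<tau> a b = integral {\<tau>..1} (\<lambda>t. t powr (a - 1) * (1 - t) powr (b - 1))"
  using Henstock_Kurzweil_Integration.integral_combine[OF _ _ integrable_Beta'[OF a b], of \<tau>] assms
  unfolding beta_fn_def inc_beta_def by simp

lemma beta_fn_minus_inc_beta_pos:
  assumes "a > 0" "b > 0" "0 \<le> \<tau>" "\<tau> < 1"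
  shows "0 < beta_fn a b - inc_beta \<tau> a b"
  using assms by (simp add: beta_fn_minus_inc_beta integral_beta_integrand_pos)

lemma beta_fn_minus_inc_beta_symmetric:
  assumes a: "a > 0" and "0 \<le> \<tau>" "\<tau> \<le> 1"
  shows "beta_fn a a - inc_beta \<tau> a a = inc_beta (1 - \<tau>) a a"
proof -
  let ?f = "\<lambda>t::real. t powr (a - 1) * (1 - t) powr (a - 1)"
  have "integral {\<tau>..1} ?f = integral {-1..-\<tau>} (\<lambda>t. ?f (-t))"
    using Henstock_Kurzweil_Integration.integral_reflect_real[of 1 \<tau> ?f] by simp
  also have "\<dots> = integral {0..1 - \<tau>} ((\<lambda>t. ?f (-t)) \<circ> (+) (-1))"
    using integral_shift_Icc_real[of 0 "1 - \<tau>" "\<lambda>t. ?f (-t)" "-1"] by simp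
  also have "(\<lambda>t. ?f (-t)) \<circ> (+) (-1) = ?f"
    by (simp add: fun_eq_iff mult.commute)
  finally show ?thesis
    using beta_fn_minus_inc_beta[OF a a assms(2,3)] by (simp add: inc_beta_def)
qed

text \<open>By symmetry of the \<open>Beta(\<alpha>, \<alpha>)\<close> density, at least half of its mass lies below any
  \<open>\<tau> \<ge> 1/2\<close>; this puts the root of \<open>m\<close> at or below \<open>1/2\<close>.\<close>
lemma m_fun_affine:
  assumes d: "d \<ge> 2" and \<gamma>: "0 \<le> \<gamma>" "\<gamma> < 1"
  obtains K p\<^sub>0 where "K > 0" "p\<^sub>0 \<le> 1/2" "\<And>p. m_fun d \<gamma> p = K * (p - p\<^sub>0)"
proof -
  define a where "a = (real d - 1) / 2"
  define \<tau> where "\<tau> = (1 + \<gamma>) / 2"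
  define B\<^sub>l where "B\<^sub>l = inc_beta \<tau> a a"
  define B\<^sub>u where "B\<^sub>u = beta_fn a a - inc_beta \<tau> a a"
  have a: "a > 0" using d by (simp add: a_def)
  have \<tau>: "1/2 \<le> \<tau>" "\<tau> < 1" using \<gamma> by (auto simp: \<tau>_def)
  have B\<^sub>l: "B\<^sub>l > 0" unfolding B\<^sub>l_def using a \<tau> by (intro inc_beta_pos) auto
  have B\<^sub>u: "B\<^sub>u > 0" unfolding B\<^sub>u_def using a \<tau> by (intro beta_fn_minus_inc_beta_pos) auto
  have "B\<^sub>u \<le> B\<^sub>l"
    unfolding B\<^sub>u_def B\<^sub>l_def using a \<tau>
    by (simp add: beta_fn_minus_inc_beta_symmetric inc_beta_mono)
  define C where "C = (1 - \<gamma>\<^sup>2) powr a / (2 ^ (d - 2) * (real d - 1))"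
  have "\<gamma>\<^sup>2 < 1" using \<gamma> by (simp add: abs_square_less_1)
  then have C: "C > 0" using d unfolding C_def by (intro divide_pos_pos) auto
  show ?thesis
  proof
    show "C * (1 / B\<^sub>u + 1 / B\<^sub>l) > 0" using C B\<^sub>u B\<^sub>l by (intro mult_pos_pos add_pos_pos) auto
    show "B\<^sub>u / (B\<^sub>u + B\<^sub>l) \<le> 1/2" using B\<^sub>u B\<^sub>l \<open>B\<^sub>u \<le> B\<^sub>l\<close> by (simp add: field_simps)
    fix p
    have "m_fun d \<gamma> p = C * (p / B\<^sub>u - (1 - p) / B\<^sub>l)"
      unfolding m_fun_def Let_def C_def B\<^sub>u_def B\<^sub>l_def a_def \<tau>_def by simp
    also have "p / B\<^sub>u - (1 - p) / B\<^sub>l = (1 / B\<^sub>u + 1 / B\<^sub>l) * (p - B\<^sub>u / (B\<^sub>u + B\<^sub>l))"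
      using B\<^sub>u B\<^sub>l by (simp add: divide_simps) (simp add: algebra_simps)
    finally show "m_fun d \<gamma> p = C * (1 / B\<^sub>u + 1 / B\<^sub>l) * (p - B\<^sub>u / (B\<^sub>u + B\<^sub>l))"
      by (simp only: mult.assoc)
  qed
qed

lemma m_fun_pos:
  assumes "d \<ge> 2" "0 \<le> \<gamma>" "\<gamma> < 1" "1/2 < p"
  shows "0 < m_fun d \<gamma> p"
proof -
  obtain K r where "K > 0" "r \<le> 1/2" "\<And>p. m_fun d \<gamma> p = K * (p - r)"
    using m_fun_affine[OF assms(1-3)] by blast
  then show ?thesis using assms(4) by simp
qed

lemma inverse_m_fun_le:
  assumes "d \<ge> 2" "0 \<le> \<gamma>" "\<gamma> < 1" and lam: "lam > 0" and p0: "1/2 < p0"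
    and p: "p0 - lam * (p0 - 1/2) / (1 + lam) \<le> p"
  shows "0 < m_fun d \<gamma> p" and "1 / m_fun d \<gamma> p \<le> (1 + lam) / m_fun d \<gamma> p0"
proof -
  obtain K r where K: "K > 0" and r: "r \<le> 1/2" and m: "\<And>p. m_fun d \<gamma> p = K * (p - r)"
    using m_fun_affine[OF assms(1-3)] by blast
  have "(1 + lam) * (p0 - lam * (p0 - 1/2) / (1 + lam) - r) = p0 - r + lam * (1/2 - r)"
    using lam by (simp add: divide_simps) (simp add: algebra_simps)
  moreover have "(1 + lam) * (p0 - lam * (p0 - 1/2) / (1 + lam) - r) \<le> (1 + lam) * (p - r)"
    using p lam by (intro mult_left_mono) auto
  moreover have "0 \<le> lam * (1/2 - r)" using lam r by simp
  ultimately have le: "p0 - r \<le> (1 + lam) * (p - r)" by linarith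
  have "0 < p0 - r" using p0 r by simp
  then have "0 < (1 + lam) * (p - r)" using le by linarith
  then have "0 < p - r" using lam by (simp add: zero_less_mult_iff)
  then show "0 < m_fun d \<gamma> p" unfolding m using K by simp
  have "K * (p0 - r) \<le> (1 + lam) * (K * (p - r))"
    using mult_left_mono[OF le, of K] K by (simp add: algebra_simps)
  then show "1 / m_fun d \<gamma> p \<le> (1 + lam) / m_fun d \<gamma> p0"
    using \<open>0 < p - r\<close> \<open>0 < p0 - r\<close> K unfolding m by (simp add: divide_simps)
qed

section \<open>Independent candidates\<close>

lemma measure_PiM_components_in:
  fixes M :: "'b measure"
  assumes M: "prob_space M" and J: "J \<subseteq> I" "finite J" and S: "S \<in> sets M"
  shows "measure (PiM I (\<lambda>_. M)) {\<omega> \<in> space (PiM I (\<lambda>_. M)). \<forall>j\<in>J. \<omega> j \<in> S} = measure M S ^ card J"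
proof -
  interpret M: prob_space M by (rule M)
  have "{\<omega> \<in> space (PiM I (\<lambda>_. M)). \<forall>j\<in>J. \<omega> j \<in> S} = prod_emb I (\<lambda>_. M) J (Pi\<^sub>E J (\<lambda>_. S))"
    using J by (auto simp: prod_emb_def space_PiM PiE_iff extensional_def)
  moreover have "emeasure (PiM I (\<lambda>_. M)) (prod_emb I (\<lambda>_. M) J (Pi\<^sub>E J (\<lambda>_. S))) = ennreal (measure M S ^ card J)"
    using J S by (simp add: emeasure_PiM_emb M M.emeasure_eq_measure prod_ennreal ennreal_power)
  ultimately show ?thesis by (simp add: measure_def)
qed

lemma (in prob_space) has_bochner_integral_indicator_minus_product:
  assumes "A \<in> events" "B \<in> events"
  shows "has_bochner_integral M (\<lambda>\<omega>. (indicator A \<omega> - a) * (indicator B \<omega> - b))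
           (prob (A \<inter> B) - b * prob A - a * prob B + a * b)"
proof -
  have "(\<lambda>\<omega>. (indicator A \<omega> - a) * (indicator B \<omega> - b)) =
        (\<lambda>\<omega>. indicator (A \<inter> B) \<omega> - b * indicator A \<omega> - a * indicator B \<omega> + a * b :: real)"
    by (auto simp: fun_eq_iff indicator_def algebra_simps)
  moreover have "has_bochner_integral M (indicator C) (prob C)" if "C \<in> events" for C
    using that by (intro has_bochner_integral_real_indicator) (simp_all add: emeasure_eq_measure)
  moreover have "has_bochner_integral M (\<lambda>_. c) c" for c :: real
    by (simp add: has_bochner_integral_iff prob_space)
  ultimately show ?thesis
    using assms
    by (auto intro!: has_bochner_integral_add has_bochner_integral_diff has_bochner_integral_mult_right)
qed

lemma integral_sum_square_orthogonal:
  fixes X :: "'i \<Rightarrow> 'b \<Rightarrow> real"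
  assumes I: "finite I"
    and int: "\<And>j k. j \<in> I \<Longrightarrow> k \<in> I \<Longrightarrow> integrable M (\<lambda>\<omega>. X j \<omega> * X k \<omega>)"
    and orth: "\<And>j k. j \<in> I \<Longrightarrow> k \<in> I \<Longrightarrow> j \<noteq> k \<Longrightarrow> (\<integral>\<omega>. X j \<omega> * X k \<omega> \<partial>M) = 0"
  shows "(\<integral>\<omega>. (\<Sum>k\<in>I. X k \<omega>)\<^sup>2 \<partial>M) = (\<Sum>k\<in>I. \<integral>\<omega>. (X k \<omega>)\<^sup>2 \<partial>M)"
proof -
  have "(\<integral>\<omega>. (\<Sum>k\<in>I. X k \<omega>)\<^sup>2 \<partial>M) = (\<integral>\<omega>. (\<Sum>j\<in>I. \<Sum>k\<in>I. X j \<omega> * X k \<omega>) \<partial>M)"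
    by (simp add: power2_eq_square sum_product)
  also have "\<dots> = (\<Sum>j\<in>I. \<Sum>k\<in>I. \<integral>\<omega>. X j \<omega> * X k \<omega> \<partial>M)"
    using int by (simp add: Bochner_Integration.integral_sum Bochner_Integration.integrable_sum)
  also have "\<dots> = (\<Sum>j\<in>I. \<Sum>k\<in>I. if j = k then \<integral>\<omega>. (X k \<omega>)\<^sup>2 \<partial>M else 0)"
    using orth by (intro sum.cong refl) (auto simp: power2_eq_square)
  also have "\<dots> = (\<Sum>k\<in>I. \<integral>\<omega>. (X k \<omega>)\<^sup>2 \<partial>M)"
    using I by simp
  finally show ?thesis .
qed

lemma prob_space_candidates: "prob_space (candidates N :: (nat \<Rightarrow> 'a::euclidean_space) measure)"
  unfolding candidates_def by (intro prob_space_PiM prob_space_sphere_unif)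

lemma measure_candidates_in_cap:
  fixes x :: "'a::euclidean_space"
  assumes "J \<subseteq> {..<N}"
  shows "measure (candidates N) {zs \<in> space (candidates N). \<forall>j\<in>J. zs j \<in> cap x \<gamma>} = theta_bar x \<gamma> ^ card J"
  unfolding candidates_def theta_bar_def
  using assms finite_subset[OF assms]
  by (intro measure_PiM_components_in prob_space_sphere_unif) auto

lemma candidate_measurable [measurable]:
  assumes "k < N"
  shows "(\<lambda>zs. zs k) \<in> borel_measurable (candidates N :: (nat \<Rightarrow> 'a::euclidean_space) measure)"
proof -
  have "(\<lambda>zs. zs k) \<in> measurable (candidates N :: (nat \<Rightarrow> 'a) measure) sphere_unif"
    unfolding candidates_def using assms by (intro measurable_component_singleton) auto
  then show ?thesis by (simp add: measurable_cong_sets[OF refl sets_sphere_unif])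
qed

lemma mmrc_theta_eq_sum:
  "mmrc_theta N x \<gamma> zs = (\<Sum>k<N. indicator (cap x \<gamma>) (zs k)) / real N"
proof -
  have "{k. k < N \<and> zs k \<in> cap x \<gamma>} = {..<N} \<inter> {k. zs k \<in> cap x \<gamma>}" by auto
  then show ?thesis
    unfolding mmrc_theta_def by (simp add: indicator_def sum.If_cases)
qed

lemma mmrc_theta_measurable [measurable]:
  "mmrc_theta N x \<gamma> \<in> borel_measurable (candidates N :: (nat \<Rightarrow> 'a::euclidean_space) measure)"
  unfolding mmrc_theta_eq_sum[abs_def] by measurable

lemma mmrc_theta_bounds: "0 \<le> mmrc_theta N x \<gamma> zs" "mmrc_theta N x \<gamma> zs \<le> 1"
proof -
  have "card {k. k < N \<and> zs k \<in> cap x \<gamma>} \<le> card {..<N}" by (intro card_mono) auto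
  then show "0 \<le> mmrc_theta N x \<gamma> zs" "mmrc_theta N x \<gamma> zs \<le> 1"
    unfolding mmrc_theta_def by (auto simp: divide_le_eq_1)
qed

lemma AE_candidates_norm:
  "AE zs in (candidates N :: (nat \<Rightarrow> 'a::euclidean_space) measure). \<forall>k<N. norm (zs k) = 1"
proof -
  have "AE zs in (candidates N :: (nat \<Rightarrow> 'a) measure). \<forall>k\<in>{..<N}. norm (zs k) = 1"
    unfolding candidates_def
    by (intro AE_finite_allI AE_PiM_component[where P = "\<lambda>z. norm z = 1"]
          prob_space_sphere_unif AE_sphere_unif_norm) auto
  then show ?thesis by (auto elim: eventually_mono)
qed

lemma has_bochner_integral_cap_covariance:
  fixes x :: "'a::euclidean_space"
  assumes jk: "j < N" "k < N"
  shows "has_bochner_integral (candidates N)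
           (\<lambda>zs. (indicator (cap x \<gamma>) (zs j) - theta_bar x \<gamma>) * (indicator (cap x \<gamma>) (zs k) - theta_bar x \<gamma>))
           (if j = k then theta_bar x \<gamma> * (1 - theta_bar x \<gamma>) else 0)"
proof -
  let ?P = "candidates N :: (nat \<Rightarrow> 'a) measure"
  interpret P: prob_space ?P by (rule prob_space_candidates)
  define t where "t = theta_bar x \<gamma>"
  define E where "E i = {zs \<in> space ?P. zs i \<in> cap x \<gamma>}" for i
  have E: "E i \<in> P.events" if "i < N" for i
    unfolding E_def using that by measurable
  have prob_E: "P.prob (E i) = t" if "i < N" for i
  proof -
    have "E i = {zs \<in> space ?P. \<forall>l\<in>{i}. zs l \<in> cap x \<gamma>}" "{i} \<subseteq> {..<N}"
      using that by (auto simp: E_def)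
    with measure_candidates_in_cap[of "{i}" N x \<gamma>] show ?thesis by (simp add: t_def)
  qed
  have "E j \<inter> E k = {zs \<in> space ?P. \<forall>l\<in>{j, k}. zs l \<in> cap x \<gamma>}"
    unfolding E_def by auto
  then have prob_EE: "P.prob (E j \<inter> E k) = (if j = k then t else t\<^sup>2)"
    using measure_candidates_in_cap[of "{j, k}" N x \<gamma>] jk by (simp add: t_def power2_eq_square)
  have "P.prob (E j \<inter> E k) - t * P.prob (E j) - t * P.prob (E k) + t * t = (if j = k then t * (1 - t) else 0)"
    using prob_EE prob_E[OF jk(1)] prob_E[OF jk(2)] by (simp add: power2_eq_square algebra_simps)
  with P.has_bochner_integral_indicator_minus_product[OF E[OF jk(1)] E[OF jk(2)], of t t]
  have "has_bochner_integral ?P (\<lambda>zs. (indicator (E j) zs - t) * (indicator (E k) zs - t))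
          (if j = k then t * (1 - t) else 0)"
    by simp
  then show ?thesis
    by (rule has_bochner_integral_cong[THEN iffD1, rotated 3]) (auto simp: E_def t_def indicator_def)
qed

lemma integral_mmrc_theta_deviation_square:
  fixes x :: "'a::euclidean_space"
  assumes N: "N > 0"
  shows "(\<integral>zs. (mmrc_theta N x \<gamma> zs - theta_bar x \<gamma>)\<^sup>2 \<partial>candidates N)
           = theta_bar x \<gamma> * (1 - theta_bar x \<gamma>) / real N"
proof -
  let ?P = "candidates N :: (nat \<Rightarrow> 'a) measure"
  define t where "t = theta_bar x \<gamma>"
  define X where "X k zs = indicator (cap x \<gamma>) (zs k) - t" for k and zs :: "nat \<Rightarrow> 'a"
  note cov = has_bochner_integral_cap_covariance[of _ N _ x \<gamma>, folded t_def]
  have "mmrc_theta N x \<gamma> zs - t = (\<Sum>k<N. X k zs) / real N" for zs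
    using N by (simp add: mmrc_theta_eq_sum X_def sum_subtractf diff_divide_distrib)
  then have "(mmrc_theta N x \<gamma> zs - t)\<^sup>2 = (\<Sum>k<N. X k zs)\<^sup>2 / (real N)\<^sup>2" for zs
    by (simp add: power_divide)
  then have "(\<integral>zs. (mmrc_theta N x \<gamma> zs - t)\<^sup>2 \<partial>?P) = (\<integral>zs. (\<Sum>k<N. X k zs)\<^sup>2 \<partial>?P) / (real N)\<^sup>2"
    by simp
  also have "\<dots> = (\<Sum>k<N. \<integral>zs. (X k zs)\<^sup>2 \<partial>?P) / (real N)\<^sup>2"
    using cov[THEN integrable.intros] cov[THEN has_bochner_integral_integral_eq]
    by (subst integral_sum_square_orthogonal) (simp_all add: X_def)
  also have "\<dots> = real N * (t * (1 - t)) / (real N)\<^sup>2"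
    using cov[THEN has_bochner_integral_integral_eq] by (simp add: X_def power2_eq_square)
  also have "\<dots> = t * (1 - t) / real N"
    by (simp add: power2_eq_square)
  finally show ?thesis unfolding t_def .
qed

section \<open>MMRC selection weights\<close>

definition mmrc_cap_prob :: "real \<Rightarrow> real \<Rightarrow> real \<Rightarrow> real \<Rightarrow> real" where
  "mmrc_cap_prob tb c1 c2 \<theta> = (if \<theta> \<le> tb then \<theta> * c1 else 1 - (1 - \<theta>) * c2)"

definition mmrc_cap_weight :: "real \<Rightarrow> real \<Rightarrow> real \<Rightarrow> real \<Rightarrow> real \<Rightarrow> real" where
  "mmrc_cap_weight n tb c1 c2 \<theta> =
     (if \<theta> = tb then (1 / n) * (c1 / (\<theta> * c1 + (1 - \<theta>) * c2))
      else if \<theta> < tb then (1 / n) * (c1 / (tb * c1 + (1 - tb) * c2))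
      else (1 - n * (1 - \<theta>) * ((1 / n) * (c2 / (tb * c1 + (1 - tb) * c2)))) / (n * \<theta>))"

definition mmrc_off_weight :: "real \<Rightarrow> real \<Rightarrow> real \<Rightarrow> real \<Rightarrow> real \<Rightarrow> real" where
  "mmrc_off_weight n tb c1 c2 \<theta> =
     (if \<theta> = tb then (1 / n) * (c2 / (\<theta> * c1 + (1 - \<theta>) * c2))
      else if \<theta> < tb then (1 - n * \<theta> * ((1 / n) * (c1 / (tb * c1 + (1 - tb) * c2)))) / (n * (1 - \<theta>))
      else (1 / n) * (c2 / (tb * c1 + (1 - tb) * c2)))"

lemma mmrc_pi_eq_weights:
  "mmrc_pi N x \<gamma> p0 zs k =
    (if zs k \<in> cap x \<gamma>
     then mmrc_cap_weight (real N) (theta_bar x \<gamma>) (pu_c1 x \<gamma> p0) (pu_c2 x \<gamma> p0) (mmrc_theta N x \<gamma> zs)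
     else mmrc_off_weight (real N) (theta_bar x \<gamma>) (pu_c1 x \<gamma> p0) (pu_c2 x \<gamma> p0) (mmrc_theta N x \<gamma> zs))"
  unfolding mmrc_pi_def Let_def mmrc_cap_weight_def mmrc_off_weight_def by auto

lemma mmrc_weights:
  fixes n \<theta> tb c1 c2 :: real
  assumes n: "n > 0" and tb: "0 < tb" "tb < 1"
    and c: "tb * c1 + (1 - tb) * c2 = 1" "0 \<le> c1" "0 \<le> c2"
  shows "n * \<theta> * mmrc_cap_weight n tb c1 c2 \<theta> = mmrc_cap_prob tb c1 c2 \<theta>"
    and "n * \<theta> * mmrc_cap_weight n tb c1 c2 \<theta> + n * (1 - \<theta>) * mmrc_off_weight n tb c1 c2 \<theta> = 1"
    and "0 \<le> mmrc_cap_weight n tb c1 c2 \<theta>" and "0 \<le> mmrc_off_weight n tb c1 c2 \<theta>"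
proof -
  consider (eq) "\<theta> = tb" | (lt) "\<theta> < tb" | (gt) "\<theta> > tb" by linarith
  then have "n * \<theta> * mmrc_cap_weight n tb c1 c2 \<theta> = mmrc_cap_prob tb c1 c2 \<theta> \<and>
    n * \<theta> * mmrc_cap_weight n tb c1 c2 \<theta> + n * (1 - \<theta>) * mmrc_off_weight n tb c1 c2 \<theta> = 1 \<and>
    0 \<le> mmrc_cap_weight n tb c1 c2 \<theta> \<and> 0 \<le> mmrc_off_weight n tb c1 c2 \<theta>"
  proof cases
    case eq
    then show ?thesis
      using n c unfolding mmrc_cap_weight_def mmrc_off_weight_def mmrc_cap_prob_def by auto
  next
    case lt
    have "\<theta> * c1 \<le> tb * c1" using lt c by (intro mult_right_mono) auto
    then have "\<theta> * c1 \<le> 1" using c tb by (smt (verit) mult_nonneg_nonneg)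
    moreover have "1 - \<theta> > 0" using lt tb by simp
    ultimately show ?thesis
      using lt n c unfolding mmrc_cap_weight_def mmrc_off_weight_def mmrc_cap_prob_def
      by (auto simp: field_simps)
  next
    case gt
    have "(1 - \<theta>) * c2 \<le> (1 - tb) * c2" using gt c by (intro mult_right_mono) auto
    then have "(1 - \<theta>) * c2 \<le> 1" using c tb by (smt (verit) mult_nonneg_nonneg)
    then have "0 \<le> n * (1 - (1 - \<theta>) * c2)" using n by simp
    moreover have "\<theta> > 0" using gt tb by simp
    ultimately show ?thesis
      using gt n c unfolding mmrc_cap_weight_def mmrc_off_weight_def mmrc_cap_prob_def
      by (auto simp: field_simps)
  qed
  then show "n * \<theta> * mmrc_cap_weight n tb c1 c2 \<theta> = mmrc_cap_prob tb c1 c2 \<theta>"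
    and "n * \<theta> * mmrc_cap_weight n tb c1 c2 \<theta> + n * (1 - \<theta>) * mmrc_off_weight n tb c1 c2 \<theta> = 1"
    and "0 \<le> mmrc_cap_weight n tb c1 c2 \<theta>" and "0 \<le> mmrc_off_weight n tb c1 c2 \<theta>"
    by auto
qed

lemma mmrc_cap_prob_ge:
  assumes "tb * c1 + (1 - tb) * c2 = 1" "0 \<le> c1" "0 \<le> c2"
  shows "tb * c1 - c1 * \<bar>\<theta> - tb\<bar> \<le> mmrc_cap_prob tb c1 c2 \<theta>"
proof (cases "\<theta> \<le> tb")
  case True
  then show ?thesis by (simp add: mmrc_cap_prob_def algebra_simps)
next
  case False
  then have "(1 - \<theta>) * c2 \<le> (1 - tb) * c2" using assms by (intro mult_right_mono) auto
  then show ?thesis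
    using False assms by (simp add: mmrc_cap_prob_def) (smt (verit) mult_nonneg_nonneg)
qed

lemma mmrc_cap_prob_measurable [measurable]: "mmrc_cap_prob tb c1 c2 \<in> borel_measurable borel"
  unfolding mmrc_cap_prob_def by measurable

lemma abs_le_scaled_square:
  fixes u s :: real
  assumes "s > 0"
  shows "\<bar>u\<bar> \<le> s * u\<^sup>2 + 1 / (4 * s)"
proof -
  have "0 \<le> (2 * s * \<bar>u\<bar> - 1)\<^sup>2" by simp
  then have "4 * s * \<bar>u\<bar> \<le> 4 * s * (s * u\<^sup>2 + 1 / (4 * s))"
    using assms by (simp add: power2_eq_square algebra_simps)
  then show ?thesis using assms by simp
qed

section \<open>Error bounds\<close>

lemma norm_scaleR_minus_bounds:
  fixes z x :: "'a::real_normed_vector"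
  assumes "norm z = 1" "norm x = 1"
  shows "\<bar>c\<bar> - 1 \<le> norm (c *\<^sub>R z - x)" and "norm (c *\<^sub>R z - x) \<le> \<bar>c\<bar> + 1"
  using norm_triangle_ineq2[of "c *\<^sub>R z" x] norm_triangle_ineq4[of "c *\<^sub>R z" x] assms by simp_all

locale privunit =
  fixes x :: "'a::euclidean_space" and \<gamma> p0 :: real
  assumes norm_x: "norm x = 1" and \<gamma>: "0 \<le> \<gamma>" "\<gamma> < 1" and p0: "0 \<le> p0" "p0 \<le> 1"
begin

lemma theta_bar_bounds: "0 < theta_bar x \<gamma>" "theta_bar x \<gamma> < 1"
  using theta_bar_pos[OF norm_x \<gamma>] theta_bar_less_1[OF norm_x \<gamma>(1)] by auto

lemma theta_bar_mult_pu_c1: "theta_bar x \<gamma> * pu_c1 x \<gamma> p0 = p0"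
  using theta_bar_bounds by (simp add: pu_c1_def)

lemma pu_c1_nonneg: "0 \<le> pu_c1 x \<gamma> p0"
  using theta_bar_bounds p0 by (simp add: pu_c1_def)

lemma pu_c2_nonneg: "0 \<le> pu_c2 x \<gamma> p0"
  using theta_bar_bounds p0 by (simp add: pu_c2_def)

lemma pu_density_balance: "theta_bar x \<gamma> * pu_c1 x \<gamma> p0 + (1 - theta_bar x \<gamma>) * pu_c2 x \<gamma> p0 = 1"
  using theta_bar_bounds by (simp add: pu_c1_def pu_c2_def)

lemma mmrc_pi_sums:
  assumes N: "N > 0"
  shows "(\<Sum>k<N. mmrc_pi N x \<gamma> p0 zs k * indicator (cap x \<gamma>) (zs k)) =
           mmrc_cap_prob (theta_bar x \<gamma>) (pu_c1 x \<gamma> p0) (pu_c2 x \<gamma> p0) (mmrc_theta N x \<gamma> zs)"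
    and "(\<Sum>k<N. mmrc_pi N x \<gamma> p0 zs k) = 1"
    and "0 \<le> mmrc_pi N x \<gamma> p0 zs k"
proof -
  define \<theta> where "\<theta> = mmrc_theta N x \<gamma> zs"
  define w\<^sub>1 where "w\<^sub>1 = mmrc_cap_weight (real N) (theta_bar x \<gamma>) (pu_c1 x \<gamma> p0) (pu_c2 x \<gamma> p0) \<theta>"
  define w\<^sub>0 where "w\<^sub>0 = mmrc_off_weight (real N) (theta_bar x \<gamma>) (pu_c1 x \<gamma> p0) (pu_c2 x \<gamma> p0) \<theta>"
  define A where "A = {k. k < N \<and> zs k \<in> cap x \<gamma>}"
  define B where "B = {k. k < N \<and> zs k \<notin> cap x \<gamma>}"
  have \<pi>: "mmrc_pi N x \<gamma> p0 zs k = (if zs k \<in> cap x \<gamma> then w\<^sub>1 else w\<^sub>0)" for k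
    unfolding w\<^sub>1_def w\<^sub>0_def \<theta>_def by (rule mmrc_pi_eq_weights)
  note w = mmrc_weights[OF _ theta_bar_bounds pu_density_balance pu_c1_nonneg pu_c2_nonneg,
      of "real N" \<theta>, folded w\<^sub>1_def w\<^sub>0_def]
  have card_A: "real (card A) = real N * \<theta>"
    using N unfolding A_def \<theta>_def mmrc_theta_def by simp
  have "A \<union> B = {..<N}" "A \<inter> B = {}" "finite A" "finite B"
    unfolding A_def B_def by auto
  then have "card A + card B = N"
    using card_Un_disjoint[of A B] by simp
  then have card_B: "real (card B) = real N * (1 - \<theta>)"
    using card_A by (simp add: algebra_simps flip: of_nat_add)
  have "(\<Sum>k<N. mmrc_pi N x \<gamma> p0 zs k * indicator (cap x \<gamma>) (zs k)) = (\<Sum>k\<in>A. w\<^sub>1)"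
    unfolding \<pi> A_def by (simp add: indicator_def sum.If_cases Int_def lessThan_def conj_commute)
  also have "\<dots> = mmrc_cap_prob (theta_bar x \<gamma>) (pu_c1 x \<gamma> p0) (pu_c2 x \<gamma> p0) \<theta>"
    using card_A w(1) N by simp
  finally show "(\<Sum>k<N. mmrc_pi N x \<gamma> p0 zs k * indicator (cap x \<gamma>) (zs k)) =
      mmrc_cap_prob (theta_bar x \<gamma>) (pu_c1 x \<gamma> p0) (pu_c2 x \<gamma> p0) (mmrc_theta N x \<gamma> zs)"
    unfolding \<theta>_def .
  have "(\<Sum>k<N. mmrc_pi N x \<gamma> p0 zs k) = (\<Sum>k\<in>A. w\<^sub>1) + (\<Sum>k\<in>B. w\<^sub>0)"
    unfolding \<pi> A_def B_def by (simp add: sum.If_cases Int_def lessThan_def conj_commute)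
  also have "\<dots> = 1"
    using card_A card_B w(2) N by simp
  finally show "(\<Sum>k<N. mmrc_pi N x \<gamma> p0 zs k) = 1" .
  show "0 \<le> mmrc_pi N x \<gamma> p0 zs k"
    using w(3,4) N unfolding \<pi> by simp
qed

lemma p_mmrc_eq_integral_cap_prob:
  assumes "N > 0"
  shows "p_mmrc N x \<gamma> p0 =
    (\<integral>zs. mmrc_cap_prob (theta_bar x \<gamma>) (pu_c1 x \<gamma> p0) (pu_c2 x \<gamma> p0) (mmrc_theta N x \<gamma> zs) \<partial>candidates N)"
  unfolding p_mmrc_def using mmrc_pi_sums(1)[OF assms] by simp

text \<open>A second-moment argument: the variance of \<open>\<theta>\<close> together with a weighted AM-GM step
  (weight \<open>s\<close>) replaces a concentration inequality.\<close>
lemma p_mmrc_ge_weighted: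
  assumes N: "N > 0" and s: "s > 0"
  shows "p0 - pu_c1 x \<gamma> p0 * (s * (theta_bar x \<gamma> * (1 - theta_bar x \<gamma>) / real N) + 1 / (4 * s))
           \<le> p_mmrc N x \<gamma> p0"
proof -
  let ?P = "candidates N :: (nat \<Rightarrow> 'a) measure"
  interpret P: prob_space ?P by (rule prob_space_candidates)
  define tb c1 c2 where "tb = theta_bar x \<gamma>" and "c1 = pu_c1 x \<gamma> p0" and "c2 = pu_c2 x \<gamma> p0"
  define \<theta> where "\<theta> = mmrc_theta N x \<gamma>"
  have c: "tb * c1 + (1 - tb) * c2 = 1" "0 \<le> c1" "0 \<le> c2" "tb * c1 = p0"
    unfolding tb_def c1_def c2_def
    by (rule pu_density_balance pu_c1_nonneg pu_c2_nonneg theta_bar_mult_pu_c1)+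
  have \<theta>_bounds: "0 \<le> \<theta> zs" "\<theta> zs \<le> 1" for zs
    unfolding \<theta>_def by (rule mmrc_theta_bounds)+
  have [measurable]: "\<theta> \<in> borel_measurable ?P" unfolding \<theta>_def by measurable
  have lower: "p0 - c1 * (s * (\<theta> zs - tb)\<^sup>2 + 1 / (4 * s)) \<le> mmrc_cap_prob tb c1 c2 (\<theta> zs)" for zs
    using mmrc_cap_prob_ge[OF c(1-3), of "\<theta> zs"] abs_le_scaled_square[OF s, of "\<theta> zs - tb"] c
    by (smt (verit) mult_left_mono)
  have int_dev: "integrable ?P (\<lambda>zs. (\<theta> zs - tb)\<^sup>2)"
  proof (rule P.integrable_const_bound[where B = 1])
    show "AE zs in ?P. norm ((\<theta> zs - tb)\<^sup>2) \<le> 1"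
    proof (intro AE_I2)
      fix zs
      have "\<bar>\<theta> zs - tb\<bar> \<le> 1"
        using \<theta>_bounds[of zs] theta_bar_bounds unfolding tb_def by linarith
      then show "norm ((\<theta> zs - tb)\<^sup>2) \<le> 1" by (simp add: abs_square_le_1)
    qed
  qed measurable
  have int_cap_prob: "integrable ?P (\<lambda>zs. mmrc_cap_prob tb c1 c2 (\<theta> zs))"
  proof (rule P.integrable_const_bound[where B = 1])
    show "AE zs in ?P. norm (mmrc_cap_prob tb c1 c2 (\<theta> zs)) \<le> 1"
    proof (intro AE_I2)
      fix zs
      note w = mmrc_weights[OF zero_less_one theta_bar_bounds[folded tb_def] c(1-3)]
      then show "norm (mmrc_cap_prob tb c1 c2 (\<theta> zs)) \<le> 1"
        using \<theta>_bounds[of zs] by (smt (verit) mult_nonneg_nonneg real_norm_def)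
    qed
  qed measurable
  have "p0 - c1 * (s * (tb * (1 - tb) / real N) + 1 / (4 * s))
      = (\<integral>zs. p0 - c1 * (s * (\<theta> zs - tb)\<^sup>2 + 1 / (4 * s)) \<partial>?P)"
    using int_dev integral_mmrc_theta_deviation_square[OF N, of x \<gamma>]
    by (simp add: \<theta>_def tb_def P.prob_space algebra_simps)
  also have "\<dots> \<le> (\<integral>zs. mmrc_cap_prob tb c1 c2 (\<theta> zs) \<partial>?P)"
    using int_dev int_cap_prob lower by (intro integral_mono) auto
  also have "\<dots> = p_mmrc N x \<gamma> p0"
    unfolding p_mmrc_eq_integral_cap_prob[OF N] \<theta>_def tb_def c1_def c2_def ..
  finally show ?thesis unfolding tb_def c1_def .
qed

lemma p_mmrc_ge:
  assumes N: "N > 0"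
  shows "p0 - pu_c1 x \<gamma> p0 / (2 * sqrt N) \<le> p_mmrc N x \<gamma> p0"
proof -
  define tb where "tb = theta_bar x \<gamma>"
  define s where "s = sqrt (real N)"
  have s: "s > 0" "s\<^sup>2 = real N" using N by (auto simp: s_def)
  have "tb * (1 - tb) \<le> 1 / 4"
    using zero_le_power2[of "tb - 1/2"] by (simp add: power2_eq_square algebra_simps)
  then have "tb * (1 - tb) / s \<le> 1 / 4 / s"
    using s(1) by (rule divide_right_mono[OF _ less_imp_le])
  moreover have "s * (tb * (1 - tb) / real N) = tb * (1 - tb) / s"
    unfolding s(2)[symmetric] using s(1) by (simp add: power2_eq_square)
  moreover have "1 / (4 * s) + 1 / (4 * s) = 1 / (2 * s)" by simp
  ultimately have "pu_c1 x \<gamma> p0 * (s * (tb * (1 - tb) / real N) + 1 / (4 * s)) \<le> pu_c1 x \<gamma> p0 * (1 / (2 * s))"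
    using pu_c1_nonneg by (intro mult_left_mono) auto
  then show ?thesis
    using p_mmrc_ge_weighted[OF N s(1)] by (simp add: tb_def s_def)
qed

lemma pu_c1_le_exp:
  assumes "0 \<le> \<epsilon>" and ldp: "pu_c1 x \<gamma> p0 \<le> exp \<epsilon> * pu_c2 x \<gamma> p0"
  shows "pu_c1 x \<gamma> p0 \<le> exp \<epsilon>"
proof -
  let ?t = "theta_bar x \<gamma>" and ?c1 = "pu_c1 x \<gamma> p0" and ?c2 = "pu_c2 x \<gamma> p0"
  have "?c1 \<le> exp \<epsilon> * ?c1"
    using assms(1) pu_c1_nonneg by (simp add: mult_le_cancel_right1)
  then have "?t * ?c1 \<le> ?t * (exp \<epsilon> * ?c1)"
    using theta_bar_bounds by (intro mult_left_mono) auto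
  moreover have "(1 - ?t) * ?c1 \<le> (1 - ?t) * (exp \<epsilon> * ?c2)"
    using ldp theta_bar_bounds by (intro mult_left_mono) auto
  ultimately have "?c1 \<le> exp \<epsilon> * (?t * ?c1 + (1 - ?t) * ?c2)"
    by (simp add: algebra_simps)
  then show ?thesis by (simp add: pu_density_balance)
qed

lemma E_mmrc_le:
  assumes N: "N > 0"
  shows "E_mmrc N x \<gamma> p0 \<le> (1 / \<bar>m_fun DIM('a) \<gamma> (p_mmrc N x \<gamma> p0)\<bar> + 1)\<^sup>2"
proof -
  let ?P = "candidates N :: (nat \<Rightarrow> 'a) measure"
  interpret P: prob_space ?P by (rule prob_space_candidates)
  define m where "m = m_fun DIM('a) \<gamma> (p_mmrc N x \<gamma> p0)"
  define err where "err zs = (\<Sum>k<N. mmrc_pi N x \<gamma> p0 zs k * (norm ((1 / m) *\<^sub>R zs k - x))\<^sup>2)" for zs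
  have "AE zs in ?P. err zs \<le> (1 / \<bar>m\<bar> + 1)\<^sup>2 \<and> 0 \<le> err zs"
    using AE_candidates_norm
  proof eventually_elim
    case (elim zs)
    have "err zs \<le> (\<Sum>k<N. mmrc_pi N x \<gamma> p0 zs k * (1 / \<bar>m\<bar> + 1)\<^sup>2)"
      unfolding err_def
    proof (intro sum_mono mult_left_mono mmrc_pi_sums(3)[OF N])
      fix k assume "k \<in> {..<N}"
      then show "(norm ((1 / m) *\<^sub>R zs k - x))\<^sup>2 \<le> (1 / \<bar>m\<bar> + 1)\<^sup>2"
        using norm_scaleR_minus_bounds(2)[of "zs k" x "1 / m"] elim norm_x by (simp add: power_mono)
    qed
    also have "\<dots> = (1 / \<bar>m\<bar> + 1)\<^sup>2"
      using mmrc_pi_sums(2)[OF N] by (simp flip: sum_distrib_right)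
    finally show ?case
      unfolding err_def using mmrc_pi_sums(3)[OF N] by (auto intro: sum_nonneg)
  qed
  then have "(\<integral>zs. err zs \<partial>?P) \<le> (\<integral>zs. (1 / \<bar>m\<bar> + 1)\<^sup>2 \<partial>?P)"
    by (intro integral_mono_AE') auto
  then show ?thesis
    unfolding E_mmrc_def err_def m_def by (simp add: P.prob_space)
qed

lemma pu_density_measurable [measurable]: "pu_density x \<gamma> p0 \<in> borel_measurable borel"
  unfolding pu_density_def by measurable

lemma pu_density_nonneg: "0 \<le> pu_density x \<gamma> p0 z"
  using pu_c1_nonneg pu_c2_nonneg by (simp add: pu_density_def)

lemma has_bochner_integral_pu_density: "has_bochner_integral sphere_unif (pu_density x \<gamma> p0) 1"
proof -
  interpret S: prob_space "sphere_unif :: 'a measure" by (rule prob_space_sphere_unif)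
  have "pu_density x \<gamma> p0 = (\<lambda>z. pu_c2 x \<gamma> p0 + (pu_c1 x \<gamma> p0 - pu_c2 x \<gamma> p0) * indicator (cap x \<gamma>) z)"
    by (auto simp: fun_eq_iff pu_density_def indicator_def)
  moreover have "has_bochner_integral sphere_unif (\<lambda>z. pu_c2 x \<gamma> p0 + (pu_c1 x \<gamma> p0 - pu_c2 x \<gamma> p0) * indicator (cap x \<gamma>) z)
      (pu_c2 x \<gamma> p0 + (pu_c1 x \<gamma> p0 - pu_c2 x \<gamma> p0) * theta_bar x \<gamma>)"
    unfolding theta_bar_def
    by (intro has_bochner_integral_add has_bochner_integral_mult_right has_bochner_integral_real_indicator)
       (simp_all add: has_bochner_integral_iff S.prob_space[unfolded space_sphere_unif] S.emeasure_eq_measure)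
  ultimately show ?thesis
    using pu_density_balance by (simp add: algebra_simps)
qed

lemma E_pu_nonneg: "0 \<le> E_pu x \<gamma> p0"
  unfolding E_pu_def by (intro Bochner_Integration.integral_nonneg mult_nonneg_nonneg pu_density_nonneg) simp

lemma sqrt_E_pu_ge: "1 / \<bar>m_fun DIM('a) \<gamma> p0\<bar> - 1 \<le> sqrt (E_pu x \<gamma> p0)"
proof (cases "1 / \<bar>m_fun DIM('a) \<gamma> p0\<bar> - 1 \<le> 0")
  case True
  then show ?thesis using real_sqrt_ge_zero[OF E_pu_nonneg] by linarith
next
  case False
  interpret S: prob_space "sphere_unif :: 'a measure" by (rule prob_space_sphere_unif)
  define m where "m = m_fun DIM('a) \<gamma> p0"
  define r where "r = 1 / \<bar>m\<bar> - 1"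
  define err where "err z = (norm ((1 / m) *\<^sub>R z - x))\<^sup>2" for z :: 'a
  define dens where "dens = pu_density x \<gamma> p0"
  have r: "r > 0" using False by (simp add: r_def m_def)
  have dens: "0 \<le> dens z" "dens z \<le> pu_c1 x \<gamma> p0 + pu_c2 x \<gamma> p0" for z
    using pu_c1_nonneg pu_c2_nonneg by (simp_all add: dens_def pu_density_def)
  have err_bounds: "AE z in sphere_unif. r\<^sup>2 \<le> err z \<and> err z \<le> (1 / \<bar>m\<bar> + 1)\<^sup>2"
    using AE_sphere_unif_norm
  proof eventually_elim
    case (elim z)
    have "r \<le> norm ((1 / m) *\<^sub>R z - x)" "norm ((1 / m) *\<^sub>R z - x) \<le> 1 / \<bar>m\<bar> + 1"
      using norm_scaleR_minus_bounds[OF elim norm_x, of "1 / m"] by (simp_all add: r_def)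
    then show ?case
      unfolding err_def using r by (intro conjI power_mono) auto
  qed
  have int_dens: "integrable sphere_unif dens"
    using has_bochner_integral_pu_density unfolding dens_def by (rule integrable.intros)
  have "(\<lambda>z. dens z * err z) \<in> borel_measurable borel"
    unfolding dens_def err_def by measurable
  then have int_err: "integrable sphere_unif (\<lambda>z. dens z * err z)"
  proof (intro S.integrable_const_bound[where B = "(pu_c1 x \<gamma> p0 + pu_c2 x \<gamma> p0) * (1 / \<bar>m\<bar> + 1)\<^sup>2"])
    show "AE z in sphere_unif. norm (dens z * err z) \<le> (pu_c1 x \<gamma> p0 + pu_c2 x \<gamma> p0) * (1 / \<bar>m\<bar> + 1)\<^sup>2"
      using err_bounds
    proof eventually_elim
      case (elim z)
      have "0 \<le> err z" by (simp add: err_def)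
      then have "dens z * err z \<le> (pu_c1 x \<gamma> p0 + pu_c2 x \<gamma> p0) * (1 / \<bar>m\<bar> + 1)\<^sup>2"
        using elim dens[of z] by (intro mult_mono) auto
      then show ?case using dens(1)[of z] \<open>0 \<le> err z\<close> by simp
    qed
  qed (simp add: measurable_cong_sets[OF sets_sphere_unif refl])
  have "r\<^sup>2 = (\<integral>z. dens z * r\<^sup>2 \<partial>sphere_unif)"
    using has_bochner_integral_integral_eq[OF has_bochner_integral_pu_density] by (simp add: dens_def)
  also have "\<dots> \<le> (\<integral>z. dens z * err z \<partial>sphere_unif)"
  proof (rule integral_mono_AE)
    show "AE z in sphere_unif. dens z * r\<^sup>2 \<le> dens z * err z"
      using err_bounds by eventually_elim (simp add: mult_left_mono dens(1))
  qed (use int_dens int_err in simp_all)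
  also have "\<dots> = E_pu x \<gamma> p0"
    unfolding E_pu_def err_def m_def dens_def ..
  finally show ?thesis
    using r by (simp add: real_le_rsqrt r_def m_def)
qed

end

text \<open>Only the consequence \<open>N \<ge> 2 e\<^sup>2\<^sup>\<epsilon> Q\<^sup>2\<close>, \<open>Q = (1 + lam)/(lam (p0 - 1/2))\<close>, of the
  sample-size hypothesis is used: \<open>Q \<ge> 2\<close> makes the logarithmic factor at least \<open>1\<close>.\<close>
lemma sample_size_bound:
  fixes lam p0 \<epsilon> :: real
  assumes lam: "lam > 0" and p0: "1/2 < p0" "p0 \<le> 1"
    and N: "real N \<ge> exp (2 * \<epsilon>) / 2 * (2 * (1 + lam) / (lam * (p0 - 1/2)))\<^sup>2
                      * ln (4 * (1 + lam) / (lam * (p0 - 1/2)))"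
  shows "N > 0" and "exp \<epsilon> / (2 * sqrt (real N)) \<le> lam * (p0 - 1/2) / (1 + lam)"
proof -
  define Q where "Q = (1 + lam) / (lam * (p0 - 1/2))"
  have "lam * (p0 - 1/2) \<le> lam / 2" using lam p0 by (simp add: mult_left_le)
  then have "2 * (lam * (p0 - 1/2)) \<le> 1 + lam" by linarith
  moreover have "lam * (p0 - 1/2) > 0" using lam p0 by simp
  ultimately have Q: "Q \<ge> 2" unfolding Q_def by (simp add: le_divide_eq)
  then have "1 \<le> ln (4 * Q)"
    using exp_le ln_ge_iff[of "4 * Q" 1] by simp
  moreover have "real N \<ge> exp (2 * \<epsilon>) / 2 * (2 * Q)\<^sup>2 * ln (4 * Q)"
    using N by (simp add: Q_def)
  moreover have "exp (2 * \<epsilon>) / 2 * (2 * Q)\<^sup>2 * 1 \<le> exp (2 * \<epsilon>) / 2 * (2 * Q)\<^sup>2 * ln (4 * Q)"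
    using \<open>1 \<le> ln (4 * Q)\<close> by (intro mult_left_mono) auto
  moreover have "exp (2 * \<epsilon>) / 2 * (2 * Q)\<^sup>2 = 2 * exp (2 * \<epsilon>) * Q\<^sup>2"
    by (simp add: power_mult_distrib)
  ultimately have N2: "real N \<ge> 2 * exp (2 * \<epsilon>) * Q\<^sup>2"
    by linarith
  moreover have Q2: "0 < exp (2 * \<epsilon>) * Q\<^sup>2" using Q by simp
  ultimately show "N > 0" by simp
  have "(exp \<epsilon> * Q)\<^sup>2 = exp (2 * \<epsilon>) * Q\<^sup>2"
    by (simp add: power_mult_distrib exp_double)
  also have "\<dots> \<le> 4 * real N"
    using N2 Q2 by linarith
  also have "4 * real N = (2 * sqrt (real N))\<^sup>2"
    by (simp add: power_mult_distrib)
  finally have "exp \<epsilon> * Q \<le> 2 * sqrt (real N)"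
    by (rule power2_le_imp_le) simp
  then have "exp \<epsilon> / (2 * sqrt (real N)) \<le> 1 / Q"
    using Q \<open>N > 0\<close> by (simp add: field_simps)
  then show "exp \<epsilon> / (2 * sqrt (real N)) \<le> lam * (p0 - 1/2) / (1 + lam)"
    by (simp add: Q_def)
qed

theorem theorem6:
  fixes x :: "real ^ 'n" and \<gamma> p0 \<epsilon> lam :: real and N :: nat
  assumes "CARD('n) \<ge> 2"
    and "0 \<le> \<gamma>" and "\<gamma> < 1"
    and "p0 > 1/2" and "p0 \<le> 1"
    and "0 \<le> \<epsilon>"
    and "\<And>y :: real ^ 'n. norm y = 1 \<Longrightarrow>
           pu_c1 y \<gamma> p0 \<le> exp \<epsilon> * pu_c2 y \<gamma> p0 \<and> pu_c2 y \<gamma> p0 \<le> exp \<epsilon> * pu_c1 y \<gamma> p0"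
    and "lam > 0"
    and "real N \<ge> exp (2 * \<epsilon>) / 2 * (2 * (1 + lam) / (lam * (p0 - 1/2)))\<^sup>2
                    * ln (4 * (1 + lam) / (lam * (p0 - 1/2)))"
    and "norm x = 1"
  shows "E_mmrc N x \<gamma> p0 \<le> (1 + lam)\<^sup>2 * E_pu x \<gamma> p0
           + 2 * (1 + lam) * (2 + lam) * sqrt (E_pu x \<gamma> p0) + (2 + lam)\<^sup>2"
proof -
  interpret privunit x \<gamma> p0 using assms by unfold_locales auto
  let ?m = "m_fun DIM(real ^ 'n) \<gamma>" and ?s = "sqrt (E_pu x \<gamma> p0)"
  have N: "N > 0" and slack: "exp \<epsilon> / (2 * sqrt N) \<le> lam * (p0 - 1/2) / (1 + lam)"
    using sample_size_bound[OF assms(8,4,5,9)] by auto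
  have "pu_c1 x \<gamma> p0 / (2 * sqrt N) \<le> exp \<epsilon> / (2 * sqrt N)"
    using pu_c1_le_exp[OF assms(6)] assms(7)[OF assms(10)] by (simp add: divide_right_mono)
  then have "p0 - lam * (p0 - 1/2) / (1 + lam) \<le> p_mmrc N x \<gamma> p0"
    using p_mmrc_ge[OF N] slack by linarith
  then have mm: "0 < ?m (p_mmrc N x \<gamma> p0)" "1 / ?m (p_mmrc N x \<gamma> p0) \<le> (1 + lam) / ?m p0"
    using assms by (intro inverse_m_fun_le; simp)+
  have "0 < ?m p0" using assms by (intro m_fun_pos) auto
  then have "1 / ?m p0 \<le> ?s + 1" using sqrt_E_pu_ge by simp
  then have "(1 + lam) / ?m p0 \<le> (1 + lam) * (?s + 1)"
    using mult_left_mono[of "1 / ?m p0" "?s + 1" "1 + lam"] assms(8) by simp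
  with mm have "1 / \<bar>?m (p_mmrc N x \<gamma> p0)\<bar> + 1 \<le> (1 + lam) * ?s + (2 + lam)"
    by (simp add: algebra_simps)
  then have "E_mmrc N x \<gamma> p0 \<le> ((1 + lam) * ?s + (2 + lam))\<^sup>2"
    using E_mmrc_le[OF N] by (smt (verit) power_mono zero_le_divide_1_iff abs_ge_zero)
  also have "\<dots> = (1 + lam)\<^sup>2 * E_pu x \<gamma> p0 + 2 * (1 + lam) * (2 + lam) * ?s + (2 + lam)\<^sup>2"
    using E_pu_nonneg by (simp add: power2_eq_square algebra_simps)
  finally show ?thesis .
qed

end
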